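(* For every $n \geq 3$, the $n$-sun $S_n$ is in $B_2^m$.
   Context: For $n\ge 3$, the $n$-sun $S_n$ is the graph with vertex set $\{x_1,\dots,x_n,y_1,\dots,y_n\}$ and edge set consisting of all edges $\{x_i,x_j\}$ for $1\le i<j\le n$, the edges $\{x_i,y_i\},\{x_{i+1},y_i\}$ for $1\le i<n$, and the edges $\{x_1,y_n\},\{x_n,y_n\}$. An EPG representation of a graph is a set of paths on a rectangular grid (sequences of grid points joined consecutively by grid edges), one per vertex, such that two vertices are adjacent iff their paths share a grid edge. A bend is a point of a path where a horizontal and a vertical grid edge of the path meet. A path is monotonic if it is ascending in both columns and rows. $B_k^m$ is the class of graphs having an EPG representation in which every path is monotonic and has at most $k$ bends. *)

theory Defs
  imports Main
begin

text \<open>Grid points are pairs (column, row) of integers.  A grid edge is the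
  (unordered) set of its two endpoints.\<close>

type_synonym point = "int \<times> int"

definition grid_adj :: "point \<Rightarrow> point \<Rightarrow> bool" where
  "grid_adj p q \<longleftrightarrow> \<bar>fst p - fst q\<bar> + \<bar>snd p - snd q\<bar> = 1"

definition grid_path :: "point list \<Rightarrow> bool" where
  "grid_path ps \<longleftrightarrow> ps \<noteq> [] \<and> (\<forall>i. Suc i < length ps \<longrightarrow> grid_adj (ps ! i) (ps ! Suc i))"

definition path_edges :: "point list \<Rightarrow> point set set" where
  "path_edges ps = {{ps ! i, ps ! Suc i} | i. Suc i < length ps}"

definition monotonic_path :: "point list \<Rightarrow> bool" where
  "monotonic_path ps \<longleftrightarrow> grid_path ps \<and>
     (\<forall>i. Suc i < length ps \<longrightarrow> fst (ps ! i) \<le> fst (ps ! Suc i) \<and> snd (ps ! i) \<le> snd (ps ! Suc i))"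

text \<open>A bend is an interior point of the path where a horizontal and a vertical
  edge of the path meet.  An edge is horizontal iff its endpoints lie in the same row.\<close>

definition bends :: "point list \<Rightarrow> nat" where
  "bends ps = card {i. 0 < i \<and> Suc i < length ps \<and>
      ((snd (ps ! (i - 1)) = snd (ps ! i)) \<noteq> (snd (ps ! i) = snd (ps ! Suc i)))}"

definition in_Bm :: "nat \<Rightarrow> 'a set \<Rightarrow> 'a set set \<Rightarrow> bool" where
  "in_Bm k V Ed \<longleftrightarrow> (\<exists>P :: 'a \<Rightarrow> point list.
      (\<forall>v\<in>V. monotonic_path (P v) \<and> bends (P v) \<le> k) \<and>
      (\<forall>u\<in>V. \<forall>v\<in>V. u \<noteq> v \<longrightarrow>
          ({u, v} \<in> Ed \<longleftrightarrow> path_edges (P u) \<inter> path_edges (P v) \<noteq> {})))"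

datatype sun_vertex = X nat | Y nat

definition sun_vertices :: "nat \<Rightarrow> sun_vertex set" where
  "sun_vertices n = {X i | i. 1 \<le> i \<and> i \<le> n} \<union> {Y i | i. 1 \<le> i \<and> i \<le> n}"

definition sun_edges :: "nat \<Rightarrow> sun_vertex set set" where
  "sun_edges n =
     {{X i, X j} | i j. 1 \<le> i \<and> i < j \<and> j \<le> n}
   \<union> {{X i, Y i} | i. 1 \<le> i \<and> i < n}
   \<union> {{X (Suc i), Y i} | i. 1 \<le> i \<and> i < n}
   \<union> {{X 1, Y n}, {X n, Y n}}"

end

theory Submission
  imports Defs
begin

(* Every vertex is drawn as a staircase going up, right and up again: a monotonic path with
   at most two bends.  The path of x_i climbs column -i up to row 0, runs along row 0 to column i
   and takes one more step up, so any two x-paths share the edge from (0,0) to (1,0).  The path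
   of y_i starts with the first edge of the path of x_i, runs along its own row -i and climbs
   column s(i) up to row 1, where s is the cyclic successor on 1..n; there it shares the last
   edge of the path of x_(s i) and no edge of any other x-path.  The y-paths run horizontally in
   distinct rows and vertically in distinct columns, so they are pairwise edge-disjoint. *)

lemma path_edges_map_upt:
  "path_edges (map f [0..<Suc m]) = (\<lambda>i. {f i, f (Suc i)}) ` {..<m}"
proof -
  have "path_edges (map f [0..<Suc m]) =
      (\<lambda>i. {map f [0..<Suc m] ! i, map f [0..<Suc m] ! Suc i}) ` {..<m}"
    unfolding path_edges_def by auto
  also have "\<dots> = (\<lambda>i. {f i, f (Suc i)}) ` {..<m}"
    by (rule image_cong) (simp_all del: upt_Suc)
  finally show ?thesis .
qed

lemma monotonic_path_map_upt:
  "monotonic_path (map f [0..<Suc m]) \<longleftrightarrow>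
     (\<forall>i<m. grid_adj (f i) (f (Suc i)) \<and> fst (f i) \<le> fst (f (Suc i)) \<and> snd (f i) \<le> snd (f (Suc i)))"
  unfolding monotonic_path_def grid_path_def by (auto simp del: upt_Suc)

lemma bends_map_upt:
  "bends (map f [0..<Suc m]) =
     card {i. 0 < i \<and> i < m \<and> ((snd (f (i - 1)) = snd (f i)) \<noteq> (snd (f i) = snd (f (Suc i))))}"
  unfolding bends_def by (rule arg_cong[where f = card]) (auto simp del: upt_Suc)

definition vedge :: "int \<Rightarrow> int \<Rightarrow> point set" where
  "vedge x y = {(x, y), (x, y + 1)}"

definition hedge :: "int \<Rightarrow> int \<Rightarrow> point set" where
  "hedge x y = {(x, y), (x + 1, y)}"

lemma vedge_eq_iff [simp]: "vedge x y = vedge x' y' \<longleftrightarrow> x = x' \<and> y = y'"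
  by (auto simp: vedge_def doubleton_eq_iff)

lemma hedge_eq_iff [simp]: "hedge x y = hedge x' y' \<longleftrightarrow> x = x' \<and> y = y'"
  by (auto simp: hedge_def doubleton_eq_iff)

lemma vedge_neq_hedge [simp]: "vedge x y \<noteq> hedge x' y'" "hedge x' y' \<noteq> vedge x y"
  by (auto simp: vedge_def hedge_def doubleton_eq_iff)

definition staircase_point :: "int \<Rightarrow> int \<Rightarrow> nat \<Rightarrow> nat \<Rightarrow> nat \<Rightarrow> point" where
  "staircase_point x0 y0 a b k =
     (if k \<le> a then (x0, y0 + int k)
      else if k \<le> a + b then (x0 + int (k - a), y0 + int a)
      else (x0 + int b, y0 + int a + int (k - a - b)))"

definition staircase :: "int \<Rightarrow> int \<Rightarrow> nat \<Rightarrow> nat \<Rightarrow> nat \<Rightarrow> point list" where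
  "staircase x0 y0 a b c = map (staircase_point x0 y0 a b) [0..<Suc (a + b + c)]"

lemma staircase_point_Suc:
  "staircase_point x0 y0 a b (Suc k) =
     (if a \<le> k \<and> k < a + b
      then (fst (staircase_point x0 y0 a b k) + 1, snd (staircase_point x0 y0 a b k))
      else (fst (staircase_point x0 y0 a b k), snd (staircase_point x0 y0 a b k) + 1))"
  by (auto simp: staircase_point_def)

lemma monotonic_path_staircase: "monotonic_path (staircase x0 y0 a b c)"
  unfolding staircase_def monotonic_path_map_upt staircase_point_Suc grid_adj_def by simp

lemma bends_staircase: "bends (staircase x0 y0 a b c) \<le> 2"
proof -
  let ?p = "staircase_point x0 y0 a b"
  let ?B = "{i. 0 < i \<and> i < a + b + c \<and>
    ((snd (?p (i - 1)) = snd (?p i)) \<noteq> (snd (?p i) = snd (?p (Suc i))))}"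
  have horizontal_step: "snd (?p k) = snd (?p (Suc k)) \<longleftrightarrow> a \<le> k \<and> k < a + b" for k
    by (simp add: staircase_point_Suc)
  have "?B \<subseteq> {a, a + b}"
  proof
    fix i assume "i \<in> ?B"
    then obtain j where i: "i = Suc j"
      and bend: "(snd (?p j) = snd (?p (Suc j))) \<noteq> (snd (?p (Suc j)) = snd (?p (Suc (Suc j))))"
      by (cases i) auto
    from bend have "(a \<le> j \<and> j < a + b) \<noteq> (a \<le> Suc j \<and> Suc j < a + b)"
      unfolding horizontal_step .
    then show "i \<in> {a, a + b}" using i by auto
  qed
  then have "card ?B \<le> card {a, a + b}" by (intro card_mono) auto
  also have "\<dots> \<le> 2" by (simp add: card_insert_if)
  finally show ?thesis unfolding staircase_def bends_map_upt .
qed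

definition staircase_edges :: "int \<Rightarrow> int \<Rightarrow> nat \<Rightarrow> nat \<Rightarrow> nat \<Rightarrow> point set set" where
  "staircase_edges x0 y0 a b c =
     {vedge x0 y | y. y0 \<le> y \<and> y < y0 + int a}
   \<union> {hedge x (y0 + int a) | x. x0 \<le> x \<and> x < x0 + int b}
   \<union> {vedge (x0 + int b) y | y. y0 + int a \<le> y \<and> y < y0 + int a + int c}"

lemma vedge_in_staircase_edges:
  "vedge x y \<in> staircase_edges x0 y0 a b c \<longleftrightarrow>
     x = x0 \<and> y0 \<le> y \<and> y < y0 + int a \<or> x = x0 + int b \<and> y0 + int a \<le> y \<and> y < y0 + int a + int c"
  by (auto simp: staircase_edges_def)

lemma hedge_in_staircase_edges:
  "hedge x y \<in> staircase_edges x0 y0 a b c \<longleftrightarrow> y = y0 + int a \<and> x0 \<le> x \<and> x < x0 + int b"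
  by (auto simp: staircase_edges_def)

lemma staircase_edges_disjoint_iff:
  "staircase_edges x0 y0 a b c \<inter> staircase_edges x1 y1 a1 b1 c1 = {} \<longleftrightarrow>
     (\<forall>x y. (vedge x y \<in> staircase_edges x0 y0 a b c \<longrightarrow> vedge x y \<notin> staircase_edges x1 y1 a1 b1 c1) \<and>
            (hedge x y \<in> staircase_edges x0 y0 a b c \<longrightarrow> hedge x y \<notin> staircase_edges x1 y1 a1 b1 c1))"
  (is "?disjoint \<longleftrightarrow> ?no_common_unit_edge")
proof
  assume ?no_common_unit_edge
  moreover have "\<exists>x y. e = vedge x y \<or> e = hedge x y" if "e \<in> staircase_edges x0 y0 a b c" for e
    using that unfolding staircase_edges_def by blast
  ultimately show ?disjoint by blast
qed blast

lemma path_edges_staircase: "path_edges (staircase x0 y0 a b c) = staircase_edges x0 y0 a b c"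
proof -
  let ?p = "staircase_point x0 y0 a b"
  let ?E = "(\<lambda>k. {?p k, ?p (Suc k)}) ` {..<a + b + c}"
  have edge: "{?p k, ?p (Suc k)} =
      (if a \<le> k \<and> k < a + b then hedge else vedge) (fst (?p k)) (snd (?p k))" for k
    by (simp add: staircase_point_Suc hedge_def vedge_def)
  have "?E \<subseteq> staircase_edges x0 y0 a b c"
    unfolding edge
    by (auto simp: vedge_in_staircase_edges hedge_in_staircase_edges staircase_point_def)
  moreover have "staircase_edges x0 y0 a b c \<subseteq> ?E"
  proof
    have first_edge: "vedge x0 (y0 + int k) \<in> ?E" if "k < a" for k
      using that by (intro image_eqI[of _ _ k], unfold edge) (auto simp: staircase_point_def)
    have middle_edge: "hedge (x0 + int k) (y0 + int a) \<in> ?E" if "k < b" for k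
      using that by (intro image_eqI[of _ _ "a + k"], unfold edge) (auto simp: staircase_point_def)
    have last_edge: "vedge (x0 + int b) (y0 + int a + int k) \<in> ?E" if "k < c" for k
      using that by (intro image_eqI[of _ _ "a + b + k"], unfold edge) (auto simp: staircase_point_def)
    fix e assume "e \<in> staircase_edges x0 y0 a b c"
    then consider
        (first) y where "e = vedge x0 y" "y0 \<le> y" "y < y0 + int a"
      | (middle) x where "e = hedge x (y0 + int a)" "x0 \<le> x" "x < x0 + int b"
      | (last) y where "e = vedge (x0 + int b) y" "y0 + int a \<le> y" "y < y0 + int a + int c"
      unfolding staircase_edges_def by blast
    then show "e \<in> ?E"
    proof cases
      case first
      then show ?thesis using first_edge[of "nat (y - y0)"] by simp
    next
      case middle
      then show ?thesis using middle_edge[of "nat (x - x0)"] by simp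
    next
      case last
      then show ?thesis using last_edge[of "nat (y - y0 - int a)"] by simp
    qed
  qed
  ultimately show ?thesis
    unfolding staircase_def path_edges_map_upt by blast
qed

definition sun_succ :: "nat \<Rightarrow> nat \<Rightarrow> nat" where
  "sun_succ n i = (if i < n then Suc i else 1)"

definition sun_path :: "nat \<Rightarrow> sun_vertex \<Rightarrow> point list" where
  "sun_path n v = (case v of
      X i \<Rightarrow> staircase (- int i) (- int i - 1) (Suc i) (2 * i) 1
    | Y i \<Rightarrow> staircase (- int i) (- int i - 1) 1 (i + sun_succ n i) (Suc i))"

lemma path_edges_sun_path:
  "path_edges (sun_path n (X i)) = staircase_edges (- int i) (- int i - 1) (Suc i) (2 * i) 1"
  "path_edges (sun_path n (Y i)) = staircase_edges (- int i) (- int i - 1) 1 (i + sun_succ n i) (Suc i)"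
  by (simp_all add: sun_path_def path_edges_staircase)

lemma sun_paths_X_X_meet:
  assumes "1 \<le> i" "1 \<le> j"
  shows "path_edges (sun_path n (X i)) \<inter> path_edges (sun_path n (X j)) \<noteq> {}"
proof -
  have "hedge 0 0 \<in> path_edges (sun_path n (X i)) \<inter> path_edges (sun_path n (X j))"
    using assms by (simp add: path_edges_sun_path hedge_in_staircase_edges)
  then show ?thesis by blast
qed

lemma sun_paths_Y_Y_disjoint:
  assumes "1 \<le> i" "1 \<le> j" "i \<le> n" "j \<le> n" "i \<noteq> j"
  shows "path_edges (sun_path n (Y i)) \<inter> path_edges (sun_path n (Y j)) = {}"
  using assms
  by (auto simp: path_edges_sun_path staircase_edges_disjoint_iff vedge_in_staircase_edges
      hedge_in_staircase_edges sun_succ_def)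

lemma sun_paths_X_Y_meet_iff:
  assumes "1 \<le> i" "1 \<le> j" "i \<le> n" "j \<le> n"
  shows "path_edges (sun_path n (X i)) \<inter> path_edges (sun_path n (Y j)) \<noteq> {} \<longleftrightarrow>
    i = j \<or> i = sun_succ n j"
proof
  assume "path_edges (sun_path n (X i)) \<inter> path_edges (sun_path n (Y j)) \<noteq> {}"
  then show "i = j \<or> i = sun_succ n j"
    using assms
    by (auto simp: path_edges_sun_path staircase_edges_disjoint_iff vedge_in_staircase_edges
        hedge_in_staircase_edges sun_succ_def)
next
  have "vedge (- int j) (- int j - 1) \<in> path_edges (sun_path n (X j)) \<inter> path_edges (sun_path n (Y j))"
    by (simp add: path_edges_sun_path vedge_in_staircase_edges)
  moreover have "vedge (int (sun_succ n j)) 0 \<in>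
      path_edges (sun_path n (X (sun_succ n j))) \<inter> path_edges (sun_path n (Y j))"
    by (simp add: path_edges_sun_path vedge_in_staircase_edges sun_succ_def)
  moreover assume "i = j \<or> i = sun_succ n j"
  ultimately show "path_edges (sun_path n (X i)) \<inter> path_edges (sun_path n (Y j)) \<noteq> {}"
    by blast
qed

lemma mem_sun_vertices [simp]:
  "X i \<in> sun_vertices n \<longleftrightarrow> 1 \<le> i \<and> i \<le> n"
  "Y i \<in> sun_vertices n \<longleftrightarrow> 1 \<le> i \<and> i \<le> n"
  by (auto simp: sun_vertices_def)

lemma X_X_in_sun_edges_iff:
  "{X i, X j} \<in> sun_edges n \<longleftrightarrow> i \<noteq> j \<and> 1 \<le> i \<and> 1 \<le> j \<and> i \<le> n \<and> j \<le> n"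
proof
  assume "{X i, X j} \<in> sun_edges n"
  then show "i \<noteq> j \<and> 1 \<le> i \<and> 1 \<le> j \<and> i \<le> n \<and> j \<le> n"
    unfolding sun_edges_def by (auto simp: doubleton_eq_iff)
next
  assume "i \<noteq> j \<and> 1 \<le> i \<and> 1 \<le> j \<and> i \<le> n \<and> j \<le> n"
  moreover have "{X i', X j'} \<in> sun_edges n" if "1 \<le> i'" "i' < j'" "j' \<le> n" for i' j'
    using that unfolding sun_edges_def by blast
  ultimately show "{X i, X j} \<in> sun_edges n"
    by (metis insert_commute linorder_neqE_nat)
qed

lemma Y_Y_notin_sun_edges: "{Y i, Y j} \<notin> sun_edges n"
  unfolding sun_edges_def by (auto simp: doubleton_eq_iff)

lemma X_Y_in_sun_edges_iff:
  assumes "1 \<le> i" "1 \<le> j" "i \<le> n" "j \<le> n"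
  shows "{X i, Y j} \<in> sun_edges n \<longleftrightarrow> i = j \<or> i = sun_succ n j"
  using assms unfolding sun_edges_def sun_succ_def by (auto simp: doubleton_eq_iff)

lemma sun_edge_iff_sun_paths_meet:
  assumes "u \<in> sun_vertices n" "v \<in> sun_vertices n" "u \<noteq> v"
  shows "{u, v} \<in> sun_edges n \<longleftrightarrow> path_edges (sun_path n u) \<inter> path_edges (sun_path n v) \<noteq> {}"
proof (cases u; cases v)
  fix i j assume "u = X i" "v = X j"
  then show ?thesis
    using assms sun_paths_X_X_meet[of i j] by (simp add: X_X_in_sun_edges_iff)
next
  fix i j assume "u = X i" "v = Y j"
  then show ?thesis
    using assms sun_paths_X_Y_meet_iff[of i j] X_Y_in_sun_edges_iff[of i j] by simp
next
  fix i j assume "u = Y i" "v = X j"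
  then show ?thesis
    using assms sun_paths_X_Y_meet_iff[of j i] X_Y_in_sun_edges_iff[of j i]
    by (simp add: insert_commute Int_commute)
next
  fix i j assume "u = Y i" "v = Y j"
  then show ?thesis
    using assms sun_paths_Y_Y_disjoint[of i j] by (simp add: Y_Y_notin_sun_edges)
qed

theorem theorem3p8:
  fixes n :: nat
  assumes "n \<ge> 3"
  shows "in_Bm 2 (sun_vertices n) (sun_edges n)"
proof -
  (* The construction works for every n; the hypothesis only reflects the range of n for
     which S_n is called a sun. *)
  have "monotonic_path (sun_path n v) \<and> bends (sun_path n v) \<le> 2" for v
    by (cases v) (simp_all add: sun_path_def monotonic_path_staircase bends_staircase)
  then show ?thesis
    unfolding in_Bm_def using sun_edge_iff_sun_paths_meet by blast
qed

end
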